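(* Let $\kappa\in K_2(\mathbb{Q}(T))$. Then there exist a finite set $\Sigma$ of rational points of $S^1$ and a locally constant function $n=n_\kappa\colon S^1\setminus\Sigma\to\mathbb{Z}$ such that for every primitive $\lambda\in X$ with $\mathbb{R}_+\lambda\notin\Sigma$, the residue (tame symbol) of $\kappa$ along the boundary divisor $D_\lambda\cong\mathbb{G}_m$ equals $c\,z^{n(\mathbb{R}_+\lambda)}$ for some constant $c\in\mathbb{Q}^\times$.
   Context: $T=\mathbb{G}_m^2=\operatorname{Spec}\mathbb{Q}[X^*]$ over $\mathbb{Q}$, with cocharacter lattice $X\cong\mathbb{Z}^2$, character lattice $X^*$, and pairing $\langle\,,\rangle\colon X\times X^*\to\mathbb{Z}$. Fix an orientation of $X_{\mathbb{R}}=X\otimes\mathbb{R}$, giving $\wedge\colon X\times X\to\mathbb{Z}$ with $\bigwedge^2X\cong\mathbb{Z}$. $S^1=(X_{\mathbb{R}}\setminus\{0\})/\mathbb{R}_+$ is the circle of rays; a ray is rational if it contains a nonzero point of $X$. For primitive $\lambda\in X$ let $V_\lambda=\{\chi\in X^*:\langle\lambda,\chi\rangle\le0\}$ and $T_\lambda=\operatorname{Spec}\mathbb{Q}[V_\lambda]$, a partial toric compactification of $T$; $D_\lambda=T_\lambda\setminus T$ is an irreducible divisor, $T$-equivariantly isomorphic to $T/\lambda(\mathbb{G}_m)$, and a character $\chi$ vanishes along $D_\lambda$ to order $-\langle\lambda,\chi\rangle$. $D_\lambda$ is identified with $\mathbb{G}_m$ (coordinate $z$) via $\mathbb{G}_m\xrightarrow{\mu}T\to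 T/\lambda(\mathbb{G}_m)$ for any $\mu\in X$ with $\mu\wedge\lambda=1$. The residue along $D_\lambda$ is the tame symbol $\{f,g\}\mapsto(-1)^{v(f)v(g)}g^{v(f)}f^{-v(g)}$ for the valuation $v$ of $D_\lambda$ on $\mathbb{Q}(T)$. *)

theory Defs
  imports "HOL-Analysis.Analysis"
begin

text \<open>Lattices: X = Z^2 (cocharacters), X* = Z^2 (characters), standard pairing,
  orientation wedge (a,b) (c,d) = a d - b c.
  A Laurent polynomial in Q[X*] is a finitely supported function X* -> Q.
  A nonzero rational function in Q(T) is represented as a pair (p,q) of nonzero
  Laurent polynomials, meaning p/q.\<close>

type_synonym lpoly = "int \<times> int \<Rightarrow> rat"
type_synonym ratfun = "lpoly \<times> lpoly"

definition pairing :: "int \<times> int \<Rightarrow> int \<times> int \<Rightarrow> int" where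
  "pairing l c = fst l * fst c + snd l * snd c"

definition wedge :: "int \<times> int \<Rightarrow> int \<times> int \<Rightarrow> int" where
  "wedge a b = fst a * snd b - snd a * fst b"

definition primitive :: "int \<times> int \<Rightarrow> bool" where
  "primitive l \<longleftrightarrow> gcd (fst l) (snd l) = 1"

definition supp :: "lpoly \<Rightarrow> (int \<times> int) set" where
  "supp p = {c. p c \<noteq> 0}"

definition nonzero_lpoly :: "lpoly \<Rightarrow> bool" where
  "nonzero_lpoly p \<longleftrightarrow> finite (supp p) \<and> supp p \<noteq> {}"

definition topw :: "int \<times> int \<Rightarrow> lpoly \<Rightarrow> int" where
  "topw l p = Max (pairing l ` supp p)"

text \<open>Valuation along D_lambda: a character chi has order - <lambda,chi>.\<close>
definition val :: "int \<times> int \<Rightarrow> lpoly \<Rightarrow> int" where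
  "val l p = - topw l p"

text \<open>Restriction of the initial form of p along D_lambda, pulled back along
  mu : G_m -> T (coordinate z): chi |-> z^<mu,chi>.\<close>
definition restr :: "int \<times> int \<Rightarrow> int \<times> int \<Rightarrow> lpoly \<Rightarrow> rat \<Rightarrow> rat" where
  "restr l m p z = (\<Sum>c\<in>{c\<in>supp p. pairing l c = topw l p}. p c * z powi pairing m c)"

definition rval :: "int \<times> int \<Rightarrow> ratfun \<Rightarrow> int" where
  "rval l f = val l (fst f) - val l (snd f)"

definition rrestr :: "int \<times> int \<Rightarrow> int \<times> int \<Rightarrow> ratfun \<Rightarrow> rat \<Rightarrow> rat" where
  "rrestr l m f z = restr l m (fst f) z / restr l m (snd f) z"

definition tame :: "int \<times> int \<Rightarrow> int \<times> int \<Rightarrow> ratfun \<times> ratfun \<Rightarrow> rat \<Rightarrow> rat" where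
  "tame l m fg z =
     (-1) powi (rval l (fst fg) * rval l (snd fg))
     * rrestr l m (snd fg) z powi rval l (fst fg)
     * rrestr l m (fst fg) z powi (- rval l (snd fg))"

text \<open>An element kappa of K_2(Q(T)) is represented as a product of symbols
  {f_i, g_i}, given as a list of pairs; its residue is the product of tame symbols.\<close>
definition residue :: "int \<times> int \<Rightarrow> int \<times> int \<Rightarrow> (ratfun \<times> ratfun) list \<Rightarrow> rat \<Rightarrow> rat" where
  "residue l m k z = prod_list (map (\<lambda>fg. tame l m fg z) k)"

definition symbol_ok :: "ratfun \<times> ratfun \<Rightarrow> bool" where
  "symbol_ok fg \<longleftrightarrow> nonzero_lpoly (fst (fst fg)) \<and> nonzero_lpoly (snd (fst fg))
      \<and> nonzero_lpoly (fst (snd fg)) \<and> nonzero_lpoly (snd (snd fg))"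

definition generic_pt :: "int \<times> int \<Rightarrow> int \<times> int \<Rightarrow> (ratfun \<times> ratfun) list \<Rightarrow> rat \<Rightarrow> bool" where
  "generic_pt l m k z \<longleftrightarrow> z \<noteq> 0 \<and>
     (\<forall>fg\<in>set k. restr l m (fst (fst fg)) z \<noteq> 0 \<and> restr l m (snd (fst fg)) z \<noteq> 0
        \<and> restr l m (fst (snd fg)) z \<noteq> 0 \<and> restr l m (snd (snd fg)) z \<noteq> 0)"

text \<open>S^1 is modelled as the unit circle in R^2; the ray R_+ lambda is sgn lambda.\<close>
definition ray :: "int \<times> int \<Rightarrow> real \<times> real" where
  "ray l = sgn (real_of_int (fst l), real_of_int (snd l))"

definition rational_rays :: "(real \<times> real) set" where
  "rational_rays = ray ` {l. l \<noteq> (0, 0)}"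

end

theory Submission
  imports Defs
begin

text \<open>For a direction x in S^1 not orthogonal to any difference of two support points of
  the Laurent polynomials occurring in \<kappa>, each of them has a unique Newton-polygon vertex
  maximising the pairing with x. For x = R_+ \<lambda> its initial form along D_\<lambda> is then a monomial,
  so the tame symbol of {f, g} is c z^(a \<and> b), where a and b are the vertex differences of f
  and g; this uses the identity <\<mu>,b><\<lambda>,a> - <\<mu>,a><\<lambda>,b> = (\<mu> \<and> \<lambda>)(a \<and> b). The vertices, hence
  the exponents, are locally constant off the finitely many rational rays orthogonal to such
  differences.\<close>

lemma continuous_on_locally_const:
  fixes f :: "'a::t2_space \<Rightarrow> 'b::topological_space"
  assumes "\<And>x. x \<in> A \<Longrightarrow> eventually (\<lambda>y. f y = f x) (at x)"
  shows "continuous_on A f"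
  using assms
  by (intro continuous_at_imp_continuous_on ballI) (simp add: continuous_at tendsto_eventually)

definition dot :: "real \<times> real \<Rightarrow> int \<times> int \<Rightarrow> real" where
  "dot x c = fst x * of_int (fst c) + snd x * of_int (snd c)"

definition generic_dir :: "real \<times> real \<Rightarrow> lpoly \<Rightarrow> bool" where
  "generic_dir x p \<longleftrightarrow> (\<forall>c\<in>supp p. \<forall>c'\<in>supp p. c \<noteq> c' \<longrightarrow> dot x c \<noteq> dot x c')"

definition newton_vertex :: "real \<times> real \<Rightarrow> lpoly \<Rightarrow> int \<times> int" where
  "newton_vertex x p = (SOME v. v \<in> supp p \<and> (\<forall>c\<in>supp p. c \<noteq> v \<longrightarrow> dot x c < dot x v))"

lemma dot_diff: "dot x (c - c') = dot x c - dot x c'"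
  by (simp add: dot_def algebra_simps)

lemma newton_vertex_eqI:
  assumes "v \<in> supp p" "\<forall>c\<in>supp p. c \<noteq> v \<longrightarrow> dot x c < dot x v"
  shows "newton_vertex x p = v"
  unfolding newton_vertex_def
  by (rule some_equality) (use assms in force)+

lemma newton_vertex_strict_max:
  assumes "nonzero_lpoly p" "generic_dir x p"
  shows "newton_vertex x p \<in> supp p"
    and "\<And>c. c \<in> supp p \<Longrightarrow> c \<noteq> newton_vertex x p \<Longrightarrow> dot x c < dot x (newton_vertex x p)"
proof -
  have "finite (dot x ` supp p)" "dot x ` supp p \<noteq> {}"
    using assms(1) unfolding nonzero_lpoly_def by auto
  then obtain v where v: "v \<in> supp p" "dot x v = Max (dot x ` supp p)"
    using Max_in by (metis imageE)
  have max: "dot x c < dot x v" if "c \<in> supp p" "c \<noteq> v" for c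
    using v that assms unfolding generic_dir_def nonzero_lpoly_def
    by (metis Max_ge finite_imageI image_eqI order_less_le)
  with v have "newton_vertex x p = v" by (intro newton_vertex_eqI) auto
  with v max show "newton_vertex x p \<in> supp p"
    and "\<And>c. c \<in> supp p \<Longrightarrow> c \<noteq> newton_vertex x p \<Longrightarrow> dot x c < dot x (newton_vertex x p)"
    by auto
qed

lemma newton_vertex_eventually_const:
  assumes "nonzero_lpoly p" "generic_dir x p"
  shows "eventually (\<lambda>y. newton_vertex y p = newton_vertex x p) (at x)"
proof -
  let ?v = "newton_vertex x p"
  have "eventually (\<lambda>y. dot y c < dot y ?v) (at x)" if "c \<in> supp p - {?v}" for c
  proof -
    have "((\<lambda>y. dot y (?v - c)) \<longlongrightarrow> dot x (?v - c)) (at x)"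
      unfolding dot_def by (intro tendsto_intros)
    moreover have "0 < dot x (?v - c)"
      using newton_vertex_strict_max[OF assms] that by (simp add: dot_diff)
    ultimately have "eventually (\<lambda>y. 0 < dot y (?v - c)) (at x)"
      by (rule order_tendstoD(1))
    then show ?thesis by (simp add: dot_diff)
  qed
  then have "eventually (\<lambda>y. \<forall>c\<in>supp p - {?v}. dot y c < dot y ?v) (at x)"
    using assms(1) by (simp add: eventually_ball_finite nonzero_lpoly_def)
  then show ?thesis
    by eventually_elim (use newton_vertex_strict_max(1)[OF assms] in \<open>auto intro: newton_vertex_eqI\<close>)
qed

lemma dot_ray_less_iff:
  assumes "l \<noteq> (0, 0)"
  shows "dot (ray l) c < dot (ray l) c' \<longleftrightarrow> pairing l c < pairing l c'"
proof -
  have pos: "norm (real_of_int (fst l), real_of_int (snd l)) > 0"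
    using assms by (cases l) (auto simp: zero_prod_def)
  have "dot (ray l) c = of_int (pairing l c) / norm (real_of_int (fst l), real_of_int (snd l))" for c
    unfolding ray_def dot_def pairing_def sgn_div_norm by (simp add: divide_inverse algebra_simps)
  with pos show ?thesis by (simp add: divide_less_cancel)
qed

lemma wedge_eq_1_imp_nonzero: "wedge m l = 1 \<Longrightarrow> l \<noteq> (0, 0)"
  by (auto simp: wedge_def)

lemma norm_ray: "l \<noteq> (0, 0) \<Longrightarrow> norm (ray l) = 1"
  by (cases l) (simp add: ray_def norm_sgn zero_prod_def)

definition initial_monomial :: "int \<times> int \<Rightarrow> int \<times> int \<Rightarrow> lpoly \<Rightarrow> int \<times> int \<Rightarrow> bool" where
  "initial_monomial l m p v \<longleftrightarrow> p v \<noteq> 0 \<and> topw l p = pairing l v \<and>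
     (\<forall>z. restr l m p z = p v * z powi pairing m v)"

lemma initial_monomialI:
  assumes "finite (supp p)" "v \<in> supp p" "\<And>c. c \<in> supp p \<Longrightarrow> c \<noteq> v \<Longrightarrow> pairing l c < pairing l v"
  shows "initial_monomial l m p v"
proof -
  have top: "topw l p = pairing l v"
    unfolding topw_def using assms by (intro Max_eqI) (auto, metis less_imp_le order_refl)
  then have "{c \<in> supp p. pairing l c = topw l p} = {v}"
    using assms(2,3) by force
  with top assms(2) show ?thesis
    by (simp add: initial_monomial_def restr_def supp_def)
qed

lemma pairing_diff: "pairing l (a - b) = pairing l a - pairing l b"
  by (simp add: pairing_def algebra_simps)

lemma pairing_wedge_binet:
  "pairing m a * pairing l b - pairing m b * pairing l a = wedge m l * wedge a b"
  unfolding wedge_def pairing_def by (simp add: algebra_simps)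

lemma tame_of_initial_monomials:
  assumes w: "wedge m l = 1"
    and p1: "initial_monomial l m p1 v1" and q1: "initial_monomial l m q1 u1"
    and p2: "initial_monomial l m p2 v2" and q2: "initial_monomial l m q2 u2"
  shows "\<exists>c. c \<noteq> 0 \<and> (\<forall>z. z \<noteq> 0 \<longrightarrow>
           tame l m ((p1, q1), (p2, q2)) z = c * z powi wedge (v1 - u1) (v2 - u2))"
proof -
  define a where "a = v1 - u1"
  define b where "b = v2 - u2"
  define Cf where "Cf = p1 v1 / q1 u1"
  define Cg where "Cg = p2 v2 / q2 u2"
  define vf where "vf = - pairing l a"
  define vg where "vg = - pairing l b"
  note monomials = p1 q1 p2 q2 initial_monomial_def
  have rval: "rval l (p1, q1) = vf" "rval l (p2, q2) = vg"
    using monomials by (simp_all add: rval_def val_def vf_def vg_def a_def b_def pairing_diff)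
  have rrestr: "rrestr l m (p1, q1) z = Cf * z powi pairing m a"
    "rrestr l m (p2, q2) z = Cg * z powi pairing m b" if "z \<noteq> 0" for z :: rat
    using monomials that by (simp_all add: rrestr_def Cf_def Cg_def a_def b_def pairing_diff power_int_diff)
  define c where "c = (-1) powi (vf * vg) * Cg powi vf * Cf powi (- vg)"
  have "c \<noteq> 0" using monomials by (simp add: c_def Cf_def Cg_def)
  moreover have "tame l m ((p1, q1), (p2, q2)) z = c * z powi wedge a b" if "z \<noteq> 0" for z :: rat
  proof -
    have "tame l m ((p1, q1), (p2, q2)) z
        = (-1) powi (vf * vg) * (Cg * z powi pairing m b) powi vf * (Cf * z powi pairing m a) powi (- vg)"
      unfolding tame_def using rval rrestr[OF that] by simp
    also have "\<dots> = c * (z powi (pairing m b * vf) * z powi (pairing m a * (- vg)))"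
      by (simp add: c_def power_int_mult_distrib power_int_mult[symmetric])
    also have "\<dots> = c * z powi (pairing m b * vf - pairing m a * vg)"
      using that by (simp add: power_int_add[symmetric])
    also have "pairing m b * vf - pairing m a * vg = wedge a b"
      using pairing_wedge_binet[of m a l b] w by (simp add: vf_def vg_def)
    finally show ?thesis .
  qed
  ultimately show ?thesis unfolding a_def b_def by blast
qed

lemma residue_eq_monomial_product:
  fixes z :: rat
  assumes "z \<noteq> 0" "\<forall>fg\<in>set k. tame l m fg z = c fg * z powi e fg"
  shows "residue l m k z = prod_list (map c k) * z powi sum_list (map e k)"
  using assms(2) by (induction k) (simp_all add: residue_def power_int_add assms(1))

definition perp_rays :: "int \<times> int \<Rightarrow> (real \<times> real) set" where
  "perp_rays d = {ray (- snd d, fst d), ray (snd d, - fst d)}"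

lemma perp_rays_subset_rational_rays:
  assumes "d \<noteq> (0, 0)"
  shows "perp_rays d \<subseteq> rational_rays"
proof -
  obtain d1 d2 where "d = (d1, d2)" by (cases d)
  with assms have "(- snd d, fst d) \<noteq> (0, 0)" "(snd d, - fst d) \<noteq> (0, 0)"
    by auto
  then show ?thesis
    unfolding perp_rays_def rational_rays_def by (simp add: insert_subset imageI)
qed

lemma unit_vector_orthogonal_in_perp_rays:
  assumes x: "norm x = 1" and d: "d \<noteq> (0, 0)" and orth: "dot x d = 0"
  shows "x \<in> perp_rays d"
proof -
  obtain x1 x2 where x12: "x = (x1, x2)" by (cases x)
  define r1 where "r1 = real_of_int (fst d)"
  define r2 where "r2 = real_of_int (snd d)"
  define w where "w = (- r2, r1)"
  define N where "N = r1^2 + r2^2"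
  define S where "S = x2 * r1 - x1 * r2"
  define t where "t = S / N"
  have x_orth: "x1 * r1 + x2 * r2 = 0" using orth by (simp add: dot_def x12 r1_def r2_def)
  have N_nonzero: "N \<noteq> 0" using d by (cases d) (simp add: N_def r1_def r2_def)
  have "x1 * N = - r2 * S + r1 * (x1 * r1 + x2 * r2)"
    "x2 * N = r1 * S + r2 * (x1 * r1 + x2 * r2)"
    by (simp_all add: N_def S_def power2_eq_square algebra_simps)
  then have "x1 * N = - r2 * S" "x2 * N = r1 * S"
    unfolding x_orth by simp_all
  then have "x1 = t * - r2" "x2 = t * r1"
    using N_nonzero by (simp_all add: t_def field_simps)
  then have xt: "x = t *\<^sub>R w"
    by (simp add: x12 w_def)
  have "t \<noteq> 0"
  proof
    assume "t = 0"
    then have "x = 0" using xt by simp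
    with x show False by simp
  qed
  then have sgn_t: "sgn t = 1 \<or> sgn t = -1" by (simp add: sgn_real_def)
  have x_eq: "x = sgn t *\<^sub>R sgn w"
  proof -
    have "x = sgn x" using x by (simp add: sgn_div_norm)
    also have "\<dots> = sgn t *\<^sub>R sgn w" unfolding xt by (rule sgn_scaleR)
    finally show ?thesis .
  qed
  have perp: "perp_rays d = {sgn w, - sgn w}"
  proof -
    have "(real_of_int (- snd d), real_of_int (fst d)) = w"
      "(real_of_int (snd d), real_of_int (- fst d)) = - w"
      by (simp_all add: w_def r1_def r2_def)
    then show ?thesis
      unfolding perp_rays_def ray_def by (simp only: fst_conv snd_conv sgn_minus)
  qed
  from sgn_t show ?thesis
    unfolding perp x_eq
    by (elim disjE) (simp_all only: scaleR_one scaleR_minus1_left insert_iff simp_thms)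
qed

definition symbol_polys :: "(ratfun \<times> ratfun) list \<Rightarrow> lpoly set" where
  "symbol_polys k = (\<Union>fg\<in>set k. {fst (fst fg), snd (fst fg), fst (snd fg), snd (snd fg)})"

definition critical_rays :: "lpoly set \<Rightarrow> (real \<times> real) set" where
  "critical_rays P = (\<Union>p\<in>P. \<Union>c\<in>supp p. \<Union>c'\<in>supp p - {c}. perp_rays (c - c'))"

lemma finite_critical_rays:
  assumes "finite P" "\<forall>p\<in>P. finite (supp p)"
  shows "finite (critical_rays P)"
  unfolding critical_rays_def perp_rays_def using assms by (intro finite_UN_I) auto

lemma critical_rays_subset_rational_rays: "critical_rays P \<subseteq> rational_rays"
  unfolding critical_rays_def
  by (intro UN_least perp_rays_subset_rational_rays) (auto simp flip: zero_prod_def)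

lemma generic_dir_off_critical_rays:
  assumes "x \<in> sphere 0 1 - critical_rays P" "p \<in> P"
  shows "generic_dir x p"
  unfolding generic_dir_def
proof (intro ballI impI)
  fix c c' assume c: "c \<in> supp p" "c' \<in> supp p" "c \<noteq> c'"
  show "dot x c \<noteq> dot x c'"
  proof
    assume "dot x c = dot x c'"
    then have "x \<in> perp_rays (c - c')"
      using assms(1) c
      by (intro unit_vector_orthogonal_in_perp_rays) (auto simp: dot_diff simp flip: zero_prod_def)
    with assms c show False unfolding critical_rays_def by blast
  qed
qed

definition tame_exponent :: "real \<times> real \<Rightarrow> ratfun \<times> ratfun \<Rightarrow> int" where
  "tame_exponent x fg =
     wedge (newton_vertex x (fst (fst fg)) - newton_vertex x (snd (fst fg)))
           (newton_vertex x (fst (snd fg)) - newton_vertex x (snd (snd fg)))"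

definition residue_exponent :: "(ratfun \<times> ratfun) list \<Rightarrow> real \<times> real \<Rightarrow> int" where
  "residue_exponent k x = sum_list (map (tame_exponent x) k)"

lemma residue_exponent_eventually_const:
  assumes "\<forall>p\<in>symbol_polys k. nonzero_lpoly p \<and> generic_dir x p"
  shows "eventually (\<lambda>y. residue_exponent k y = residue_exponent k x) (at x)"
proof -
  have "finite (symbol_polys k)" by (simp add: symbol_polys_def)
  then have "eventually (\<lambda>y. \<forall>p\<in>symbol_polys k. newton_vertex y p = newton_vertex x p) (at x)"
    using assms newton_vertex_eventually_const by (simp add: eventually_ball_finite)
  then show ?thesis
    by eventually_elim
       (auto simp: residue_exponent_def tame_exponent_def symbol_polys_def intro!: arg_cong[where f = sum_list])
qed

lemma initial_monomial_newton_vertex: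
  assumes "l \<noteq> (0, 0)" "nonzero_lpoly p" "generic_dir (ray l) p"
  shows "initial_monomial l m p (newton_vertex (ray l) p)"
  using assms newton_vertex_strict_max[OF assms(2,3)]
  by (intro initial_monomialI) (auto simp: nonzero_lpoly_def dot_ray_less_iff[symmetric])

lemma tame_eq_monomial:
  assumes "wedge m l = 1" "symbol_ok fg"
    and "\<forall>p\<in>{fst (fst fg), snd (fst fg), fst (snd fg), snd (snd fg)}. generic_dir (ray l) p"
  shows "\<exists>c. c \<noteq> 0 \<and> (\<forall>z. z \<noteq> 0 \<longrightarrow> tame l m fg z = c * z powi tame_exponent (ray l) fg)"
proof -
  obtain p1 q1 p2 q2 where fg: "fg = ((p1, q1), (p2, q2))" by (metis prod.collapse)
  have "initial_monomial l m p (newton_vertex (ray l) p)" if "p \<in> {p1, q1, p2, q2}" for p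
    using assms that wedge_eq_1_imp_nonzero[OF assms(1)]
    by (intro initial_monomial_newton_vertex) (auto simp: fg symbol_ok_def)
  then show ?thesis
    unfolding fg tame_exponent_def by (intro tame_of_initial_monomials[OF assms(1)]) simp_all
qed

lemma residue_eq_monomial:
  assumes "wedge m l = 1" "\<forall>fg\<in>set k. symbol_ok fg"
    and "\<forall>p\<in>symbol_polys k. generic_dir (ray l) p"
  shows "\<exists>c. c \<noteq> 0 \<and>
           (\<forall>z. generic_pt l m k z \<longrightarrow> residue l m k z = c * z powi residue_exponent k (ray l))"
proof -
  have "\<forall>fg\<in>set k. \<exists>c. c \<noteq> 0 \<and> (\<forall>z. z \<noteq> 0 \<longrightarrow> tame l m fg z = c * z powi tame_exponent (ray l) fg)"
    using assms by (intro ballI tame_eq_monomial) (auto simp: symbol_polys_def)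
  then obtain c where c: "\<forall>fg\<in>set k. c fg \<noteq> 0 \<and>
      (\<forall>z. z \<noteq> 0 \<longrightarrow> tame l m fg z = c fg * z powi tame_exponent (ray l) fg)"
    by metis
  show ?thesis
  proof (intro exI conjI allI impI)
    show "prod_list (map c k) \<noteq> 0" using c by (induction k) auto
    fix z assume "generic_pt l m k z"
    then have "z \<noteq> 0" by (simp add: generic_pt_def)
    with c show "residue l m k z = prod_list (map c k) * z powi residue_exponent k (ray l)"
      unfolding residue_exponent_def by (intro residue_eq_monomial_product) auto
  qed
qed

theorem mainTheorem13:
  fixes \<kappa> :: "(ratfun \<times> ratfun) list"
  assumes "\<forall>fg\<in>set \<kappa>. symbol_ok fg"
  shows "\<exists>(\<Sigma> :: (real \<times> real) set) (n :: real \<times> real \<Rightarrow> int).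
           finite \<Sigma> \<and> \<Sigma> \<subseteq> rational_rays \<and>
           continuous_on (sphere 0 1 - \<Sigma>) n \<and>
           (\<forall>l. primitive l \<and> ray l \<notin> \<Sigma> \<longrightarrow>
              (\<forall>m. wedge m l = 1 \<longrightarrow>
                 (\<exists>c :: rat. c \<noteq> 0 \<and>
                    (\<forall>z. generic_pt l m \<kappa> z \<longrightarrow> residue l m \<kappa> z = c * z powi n (ray l)))))"
proof -
  let ?P = "symbol_polys \<kappa>"
  have nonzero: "\<forall>p\<in>?P. nonzero_lpoly p"
    using assms by (auto simp: symbol_polys_def symbol_ok_def)
  show ?thesis
  proof (rule exI, rule exI, intro conjI allI impI)
    show "finite (critical_rays ?P)"
      using nonzero by (intro finite_critical_rays) (auto simp: symbol_polys_def nonzero_lpoly_def)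
    show "critical_rays ?P \<subseteq> rational_rays" by (rule critical_rays_subset_rational_rays)
    show "continuous_on (sphere 0 1 - critical_rays ?P) (residue_exponent \<kappa>)"
      using nonzero generic_dir_off_critical_rays
      by (intro continuous_on_locally_const residue_exponent_eventually_const) blast
    fix l m assume "primitive l \<and> ray l \<notin> critical_rays ?P" and m: "wedge m l = 1"
    then have "ray l \<in> sphere 0 1 - critical_rays ?P"
      by (simp add: norm_ray wedge_eq_1_imp_nonzero)
    then show "\<exists>c. c \<noteq> 0 \<and> (\<forall>z. generic_pt l m \<kappa> z \<longrightarrow>
        residue l m \<kappa> z = c * z powi residue_exponent \<kappa> (ray l))"
      using generic_dir_off_critical_rays by (intro residue_eq_monomial[OF m assms]) blast
  qed
qed

end
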